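(* Let $\mu\ge\lambda>0$. Let $\zeta_t^O$ be the nearest neighbours three state contact process with parameters $(\lambda,\mu)$ started from the standard initial configuration, with $I_t=\{x:\zeta_t^O(x)=1\}$, $r_t=\sup I_t$, $l_t=\inf I_t$, and let $\xi_t^{\mathbb Z}$ be the nearest neighbours contact process with parameter $\mu$ started from $\mathbb Z$, the two coupled by the graphical construction. Then for all $t\ge0$, $I_t=\xi_t^{\mathbb Z}\cap[l_t,r_t]$ on the event $\{I_t\ne\emptyset\}$.
   Context: The nearest neighbours three state contact process with parameters $(\lambda,\mu)$ has state space $\{-1,0,1\}^{\mathbb Z}$; each site $x$ makes transitions $-1\to1$ at rate $\lambda n_t(x)$, $0\to1$ at rate $\mu n_t(x)$, $1\to0$ at rate 1, where $n_t(x)$ is the number of $y\in\{x-1,x+1\}$ in state 1. The standard initial configuration has the origin in state 1 and all other sites in state $-1$. Graphical construction (for $\mu\ge\lambda$): for each $x\in\mathbb Z$ and $y\in\{x-1,x+1\}$ take independent Poisson processes of rate $\lambda$ ($\lambda$-arrows from $x$ to $y$) and rate $\mu-\lambda$ ($(\mu-\lambda)$-arrows from $x$ to $y$), and for each $x$ an independent rate-1 Poisson process of recovery marks at $x$. The three state process is defined from these: at a $\lambda$-arrow from $x$ to $y$, if just before $x$ is in state 1 and $y$ in state $0$ or $-1$, then $y$ becomes 1; at a $(\mu-\lambda)$-arrow from $x$ to $y$, if just before $x$ is in state 1 and $y$ in state 0, then $y$ becomes 1; at a recovery mark at $x$, if $x$ is in state 1 it becomes 0. The contact process with parameter $\mu$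 started from $A\subseteq\mathbb Z$ is $\xi_t^A=\{y:$ there is an oriented path from $(x,0)$ for some $x\in A$ to $(y,t)$ moving up time lines in increasing time without passing through a recovery mark and along arrows of either type in the direction of the arrow$\}$. Processes built from the same realization are said to be coupled by the graphical construction. *)

theory Defs
  imports Complex_Main
begin

text \<open>A realization of the graphical construction is given pathwise as a map
  from marks to the set of times at which that mark occurs:
  LamArrow x y : the lambda-arrows from x to y,
  MuArrow x y  : the (mu - lambda)-arrows from x to y,
  Recov x      : the recovery marks at x.\<close>

datatype mark = LamArrow int int | MuArrow int int | Recov int

type_synonym realization = "mark \<Rightarrow> real set"

definition no_crossing :: "realization \<Rightarrow> real \<Rightarrow> int \<Rightarrow> bool" where
  "no_crossing G T x \<longleftrightarrow>
     (\<forall>m \<in> {LamArrow x (x+1), LamArrow (x+1) x, MuArrow x (x+1), MuArrow (x+1) x}.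
        G m \<inter> {..T} = {})"

text \<open>Almost sure properties of a realization of the independent Poisson
  processes of the graphical construction (nearest neighbour arrows only,
  all mark times positive, locally finite in time, pairwise distinct times,
  and infinitely many edges in both directions not crossed by any arrow up to
  any finite time horizon).\<close>
definition good_realization :: "realization \<Rightarrow> bool" where
  "good_realization G \<longleftrightarrow>
     (\<forall>x y. G (LamArrow x y) \<noteq> {} \<longrightarrow> y = x + 1 \<or> y = x - 1) \<and>
     (\<forall>x y. G (MuArrow x y) \<noteq> {} \<longrightarrow> y = x + 1 \<or> y = x - 1) \<and>
     (\<forall>m. \<forall>s \<in> G m. 0 < s) \<and>
     (\<forall>m T. finite (G m \<inter> {..T})) \<and>
     (\<forall>m m'. m \<noteq> m' \<longrightarrow> G m \<inter> G m' = {}) \<and>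
     (\<forall>T n. (\<exists>x \<ge> n. no_crossing G T x) \<and> (\<exists>x \<le> -n. no_crossing G T x))"

text \<open>Oriented paths: reach G x s y t means there is an oriented path from
  (x,s) to (y,t) going up time lines without passing through a recovery mark
  and along arrows of either type in the direction of the arrow.\<close>
inductive reach :: "realization \<Rightarrow> int \<Rightarrow> real \<Rightarrow> int \<Rightarrow> real \<Rightarrow> bool" for G where
  vert: "s \<le> t \<Longrightarrow> G (Recov x) \<inter> {s<..t} = {} \<Longrightarrow> reach G x s x t"
| jump: "reach G x s z u \<Longrightarrow> u \<in> G (LamArrow z w) \<union> G (MuArrow z w) \<Longrightarrow>
         reach G w u y t \<Longrightarrow> reach G x s y t"

text \<open>The contact process with parameter mu started from A.\<close>
definition contact_process :: "realization \<Rightarrow> int set \<Rightarrow> real \<Rightarrow> int set" where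
  "contact_process G A t = {y. \<exists>x \<in> A. reach G x 0 y t}"

definition affects :: "int \<Rightarrow> mark \<Rightarrow> bool" where
  "affects x m \<longleftrightarrow> m = Recov x \<or> (\<exists>y. m = LamArrow y x \<or> m = MuArrow y x)"

text \<open>zeta is the three state process defined from G by the graphical
  construction, started from the standard initial configuration: the state of a
  site only changes at marks affecting it (right-continuously), and at such a
  mark it is updated according to the rules, using the states just before.\<close>
definition three_state_process :: "realization \<Rightarrow> (real \<Rightarrow> int \<Rightarrow> int) \<Rightarrow> bool" where
  "three_state_process G \<zeta> \<longleftrightarrow>
     \<zeta> 0 = (\<lambda>x. if x = 0 then 1 else -1) \<and>
     (\<forall>x s t. 0 \<le> s \<longrightarrow> s \<le> t \<longrightarrow>
        (\<forall>m. affects x m \<longrightarrow> G m \<inter> {s<..t} = {}) \<longrightarrow> \<zeta> t x = \<zeta> s x) \<and>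
     (\<forall>x. \<forall>s \<in> G (Recov x). \<exists>\<epsilon>>0. \<epsilon> \<le> s \<and> (\<forall>u \<in> {s-\<epsilon><..<s}.
        \<zeta> s x = (if \<zeta> u x = 1 then 0 else \<zeta> u x))) \<and>
     (\<forall>x y. \<forall>s \<in> G (LamArrow y x). \<exists>\<epsilon>>0. \<epsilon> \<le> s \<and> (\<forall>u \<in> {s-\<epsilon><..<s}.
        \<zeta> s x = (if \<zeta> u y = 1 \<and> (\<zeta> u x = 0 \<or> \<zeta> u x = -1) then 1 else \<zeta> u x))) \<and>
     (\<forall>x y. \<forall>s \<in> G (MuArrow y x). \<exists>\<epsilon>>0. \<epsilon> \<le> s \<and> (\<forall>u \<in> {s-\<epsilon><..<s}.
        \<zeta> s x = (if \<zeta> u y = 1 \<and> \<zeta> u x = 0 then 1 else \<zeta> u x)))"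

end

theory Submission
  imports Defs
begin

text \<open>Inside the hull of the infected sites no site is in state -1, so there a
  \<open>\<lambda>\<close>-arrow and a \<open>(\<mu>-\<lambda>)\<close>-arrow out of an infected site both infect their target,
  exactly as in the contact process \<open>\<xi>\<^sup>\<int>\<close>. Hence the property "between any two
  infected sites no site is in state -1, and a site is infected iff it lies in
  \<open>\<xi>\<^sup>\<int>\<^sub>t\<close>" is preserved by every recovery mark and every arrow. Up to a fixed time
  the origin lies in a window bounded by two edges crossed by no arrow; outside
  the window every site stays in state -1, and inside it only finitely many marks
  occur, so the invariant propagates from time 0 by induction over these marks.\<close>

fun target :: "mark \<Rightarrow> int" where
  "target (Recov y) = y"
| "target (LamArrow z y) = y"
| "target (MuArrow z y) = y"

fun sites :: "mark \<Rightarrow> int set" where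
  "sites (Recov y) = {y}"
| "sites (LamArrow z y) = {z, y}"
| "sites (MuArrow z y) = {z, y}"

fun nearest_neighbour_mark :: "mark \<Rightarrow> bool" where
  "nearest_neighbour_mark (Recov y) = True"
| "nearest_neighbour_mark (LamArrow z y) = (y = z + 1 \<or> y = z - 1)"
| "nearest_neighbour_mark (MuArrow z y) = (y = z + 1 \<or> y = z - 1)"

lemma affects_iff_target: "affects x m \<longleftrightarrow> target m = x"
  by (cases m) (auto simp: affects_def)

lemma target_in_sites: "target m \<in> sites m"
  by (cases m) auto

definition quiet :: "realization \<Rightarrow> int \<Rightarrow> real set \<Rightarrow> bool" where
  "quiet G y I \<longleftrightarrow> (\<forall>m. target m = y \<longrightarrow> G m \<inter> I = {})"

lemma good_realization_pos: "good_realization G \<Longrightarrow> s \<in> G m \<Longrightarrow> 0 < s"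
  unfolding good_realization_def by blast

lemma good_realization_disjoint: "good_realization G \<Longrightarrow> m \<noteq> m' \<Longrightarrow> s \<in> G m \<Longrightarrow> s \<notin> G m'"
  unfolding good_realization_def by blast

lemma good_realization_nearest_neighbour:
  assumes "good_realization G" "s \<in> G m"
  shows "nearest_neighbour_mark m"
proof -
  have "G m \<noteq> {}"
    using assms(2) by blast
  with assms(1) show ?thesis
    unfolding good_realization_def by (cases m) simp_all
qed

lemma quiet_upto_mark:
  assumes "good_realization G" "e \<in> G m" "target m \<noteq> y" "quiet G y {u<..<e}"
  shows "quiet G y {u<..e}"
  using assms good_realization_disjoint[OF assms(1), of m _ e]
  unfolding quiet_def by (metis greaterThanAtMost_iff greaterThanLessThan_iff disjoint_iff order_le_less)

section \<open>The contact process\<close>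

lemma reach_le: "reach G x s y t \<Longrightarrow> s \<le> t"
  by (induction rule: reach.induct) auto

lemma reach_last_arrow:
  assumes "reach G x s y t"
  obtains u where "s \<le> u" "u \<le> t" "G (Recov y) \<inter> {u<..t} = {}"
    "u = s \<and> x = y \<or> (\<exists>z. reach G x s z u \<and> u \<in> G (LamArrow z y) \<union> G (MuArrow z y))"
  using assms
proof (induction arbitrary: thesis rule: reach.induct)
  case (vert s t x)
  then show ?case by auto
next
  case (jump x s z u w y t)
  obtain u' where u': "u \<le> u'" "u' \<le> t" "G (Recov y) \<inter> {u'<..t} = {}"
    "u' = u \<and> w = y \<or> (\<exists>z'. reach G w u z' u' \<and> u' \<in> G (LamArrow z' y) \<union> G (MuArrow z' y))"
    using jump.IH(2) by blast
  have "s \<le> u" using jump.hyps(1) by (rule reach_le)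
  show ?case
  proof (cases "u' = u \<and> w = y")
    case True
    then show ?thesis using jump.prems[of u] u' \<open>s \<le> u\<close> jump.hyps(1,2) by auto
  next
    case False
    then obtain z' where "reach G w u z' u'" "u' \<in> G (LamArrow z' y) \<union> G (MuArrow z' y)"
      using u'(4) by blast
    moreover have "reach G x s z' u'"
      using jump.hyps(1,2) \<open>reach G w u z' u'\<close> by (rule reach.jump)
    ultimately show ?thesis using jump.prems[of u'] u' \<open>s \<le> u\<close> by auto
  qed
qed

lemma contact_process_last_entry:
  "y \<in> contact_process G A t \<longleftrightarrow>
     (\<exists>u. 0 \<le> u \<and> u \<le> t \<and> G (Recov y) \<inter> {u<..t} = {} \<and>
        (u = 0 \<and> y \<in> A \<or>
         (\<exists>z. z \<in> contact_process G A u \<and> u \<in> G (LamArrow z y) \<union> G (MuArrow z y))))"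
  (is "_ \<longleftrightarrow> (\<exists>u. ?entry u)")
proof
  assume "y \<in> contact_process G A t"
  then obtain x where "x \<in> A" "reach G x 0 y t"
    unfolding contact_process_def by blast
  then show "\<exists>u. ?entry u"
    by (elim reach_last_arrow) (auto simp: contact_process_def)
next
  assume "\<exists>u. ?entry u"
  then obtain u where u: "?entry u" ..
  have stay: "reach G y u y t"
    using u by (intro reach.vert) auto
  from u consider "u = 0" "y \<in> A"
    | z where "z \<in> contact_process G A u" "u \<in> G (LamArrow z y) \<union> G (MuArrow z y)"
    by blast
  then show "y \<in> contact_process G A t"
  proof cases
    case 1
    then show ?thesis using stay unfolding contact_process_def by blast
  next
    case (2 z)
    then obtain x where "x \<in> A" "reach G x 0 z u"
      unfolding contact_process_def by blast
    then show ?thesis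
      using reach.jump[OF _ 2(2) stay] unfolding contact_process_def by blast
  qed
qed

lemma contact_process_survives:
  assumes "y \<in> contact_process G A s" "s \<le> t" "G (Recov y) \<inter> {s<..t} = {}"
  shows "y \<in> contact_process G A t"
proof -
  obtain u where u: "0 \<le> u" "u \<le> s" "G (Recov y) \<inter> {u<..s} = {}"
    "u = 0 \<and> y \<in> A \<or> (\<exists>z. z \<in> contact_process G A u \<and> u \<in> G (LamArrow z y) \<union> G (MuArrow z y))"
    using assms(1) unfolding contact_process_last_entry[of y] by blast
  moreover have "G (Recov y) \<inter> {u<..t} = {}"
    using u(3) assms(3) ivl_disj_un_two(6)[OF u(2) assms(2)] by blast
  ultimately show ?thesis
    using assms(2) unfolding contact_process_last_entry[of y G A t] by auto
qed

lemma contact_process_infects: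
  assumes "z \<in> contact_process G A e" "e \<in> G (LamArrow z y) \<union> G (MuArrow z y)"
  shows "y \<in> contact_process G A e"
proof -
  obtain x where "x \<in> A" "reach G x 0 z e"
    using assms(1) unfolding contact_process_def by blast
  moreover have "reach G y e y e"
    by (rule reach.vert) auto
  ultimately show ?thesis
    using reach.jump assms(2) unfolding contact_process_def by blast
qed

lemma contact_process_quiet:
  assumes "0 \<le> s" "s \<le> t" "quiet G y {s<..t}"
  shows "y \<in> contact_process G A t \<longleftrightarrow> y \<in> contact_process G A s"
proof
  assume "y \<in> contact_process G A t"
  then obtain u where u: "0 \<le> u" "u \<le> t" "G (Recov y) \<inter> {u<..t} = {}"
    "u = 0 \<and> y \<in> A \<or> (\<exists>z. z \<in> contact_process G A u \<and> u \<in> G (LamArrow z y) \<union> G (MuArrow z y))"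
    unfolding contact_process_last_entry[of y] by blast
  have "u \<le> s"
  proof (rule ccontr)
    assume "\<not> u \<le> s"
    then obtain z where "u \<in> G (LamArrow z y) \<union> G (MuArrow z y)"
      using u(4) assms(1) by auto
    with \<open>\<not> u \<le> s\<close> u(2) assms(3) show False
      unfolding quiet_def by (metis Int_iff UnE empty_iff greaterThanAtMost_iff not_le target.simps(2,3))
  qed
  moreover have "G (Recov y) \<inter> {u<..s} = {}"
    using u(3) ivl_disj_un_two(6)[OF calculation assms(2)] by blast
  ultimately show "y \<in> contact_process G A s"
    using u(1,4) unfolding contact_process_last_entry[of y G A s] by blast
next
  assume "y \<in> contact_process G A s"
  moreover have "G (Recov y) \<inter> {s<..t} = {}"
    using assms(3) unfolding quiet_def by simp
  ultimately show "y \<in> contact_process G A t"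
    using assms(2) contact_process_survives by blast
qed

lemma contact_process_at_recovery:
  assumes "good_realization G" "e \<in> G (Recov y)"
  shows "y \<notin> contact_process G A e"
proof
  assume "y \<in> contact_process G A e"
  then obtain u where u: "u \<le> e" "G (Recov y) \<inter> {u<..e} = {}"
    "u = 0 \<or> (\<exists>z. u \<in> G (LamArrow z y) \<union> G (MuArrow z y))"
    unfolding contact_process_last_entry[of y] by blast
  have "u = e"
    using u(1,2) assms(2) by (metis disjoint_iff greaterThanAtMost_iff order_le_less)
  moreover have "0 < e"
    using good_realization_pos assms by blast
  ultimately obtain z where "e \<in> G (LamArrow z y) \<union> G (MuArrow z y)"
    using u(3) by auto
  then show False
    using good_realization_disjoint[OF assms(1)] assms(2) by blast
qed

lemma contact_process_at_arrowD:
  assumes good: "good_realization G" and e: "e \<in> G m"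
    and m: "m = LamArrow z y \<or> m = MuArrow z y"
    and "0 \<le> u" "u < e" and quiet_y: "quiet G y {u<..<e}"
    and "y \<in> contact_process G A e"
  shows "y \<in> contact_process G A u \<or> z \<in> contact_process G A e"
proof -
  obtain u' where u': "0 \<le> u'" "u' \<le> e" "G (Recov y) \<inter> {u'<..e} = {}"
    "u' = 0 \<and> y \<in> A \<or> (\<exists>z. z \<in> contact_process G A u' \<and> u' \<in> G (LamArrow z y) \<union> G (MuArrow z y))"
    using \<open>y \<in> contact_process G A e\<close> unfolding contact_process_last_entry[of y] by blast
  consider "u' \<le> u" | "u < u'" "u' < e" | "u' = e"
    using u'(2) by linarith
  then show ?thesis
  proof cases
    case 1
    have "G (Recov y) \<inter> {u'<..u} = {}"
      using u'(3) ivl_disj_un_two(6)[OF 1] \<open>u < e\<close> by fastforce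
    then have "y \<in> contact_process G A u"
      using u'(1,4) 1 unfolding contact_process_last_entry[of y G A u] by blast
    then show ?thesis ..
  next
    case 2
    then obtain z' where "u' \<in> G (LamArrow z' y) \<union> G (MuArrow z' y)"
      using u'(4) \<open>0 \<le> u\<close> by auto
    with 2 quiet_y show ?thesis
      unfolding quiet_def by (metis Int_iff UnE empty_iff greaterThanLessThan_iff target.simps(2,3))
  next
    case 3
    then obtain z' where z': "z' \<in> contact_process G A e" "e \<in> G (LamArrow z' y) \<union> G (MuArrow z' y)"
      using u'(4) good_realization_pos[OF good e] by auto
    have "z' = z"
      using good_realization_disjoint[OF good _ e] z'(2) m by (metis UnE mark.distinct mark.inject)
    then show ?thesis
      using z'(1) by blast
  qed
qed

lemma contact_process_at_arrow:
  assumes good: "good_realization G" and e: "e \<in> G m"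
    and m: "m = LamArrow z y \<or> m = MuArrow z y" and "z \<noteq> y"
    and "0 \<le> u" "u < e"
    and quiet_y: "quiet G y {u<..<e}" and quiet_z: "quiet G z {u<..<e}"
  shows "y \<in> contact_process G A e \<longleftrightarrow> y \<in> contact_process G A u \<or> z \<in> contact_process G A u"
proof -
  have z_const: "z \<in> contact_process G A e \<longleftrightarrow> z \<in> contact_process G A u"
    using contact_process_quiet quiet_upto_mark[OF good e _ quiet_z] m \<open>z \<noteq> y\<close>
      \<open>0 \<le> u\<close> \<open>u < e\<close> by auto
  have "e \<notin> G (Recov y)"
    using good_realization_disjoint[OF good _ e] m by auto
  moreover have "G (Recov y) \<inter> {u<..<e} = {}"
    using quiet_y unfolding quiet_def by simp
  ultimately have recov_free: "G (Recov y) \<inter> {u<..e} = {}"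
    by (auto simp: order_le_less)
  show ?thesis
  proof
    assume "y \<in> contact_process G A e"
    then show "y \<in> contact_process G A u \<or> z \<in> contact_process G A u"
      using contact_process_at_arrowD[OF good e m \<open>0 \<le> u\<close> \<open>u < e\<close> quiet_y] z_const by blast
  next
    assume "y \<in> contact_process G A u \<or> z \<in> contact_process G A u"
    then show "y \<in> contact_process G A e"
      using \<open>u < e\<close> recov_free z_const e m
      by (auto intro: contact_process_survives contact_process_infects)
  qed
qed

fun contact_update :: "mark \<Rightarrow> int set \<Rightarrow> int set" where
  "contact_update (Recov y) A = A - {y}"
| "contact_update (LamArrow z y) A = (if z \<in> A then insert y A else A)"
| "contact_update (MuArrow z y) A = (if z \<in> A then insert y A else A)"

fun three_state_update :: "mark \<Rightarrow> (int \<Rightarrow> int) \<Rightarrow> int \<Rightarrow> int" where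
  "three_state_update (Recov y) f = f(y := (if f y = 1 then 0 else f y))"
| "three_state_update (LamArrow z y) f = f(y := (if f z = 1 \<and> (f y = 0 \<or> f y = -1) then 1 else f y))"
| "three_state_update (MuArrow z y) f = f(y := (if f z = 1 \<and> f y = 0 then 1 else f y))"

lemma three_state_update_other: "y \<noteq> target m \<Longrightarrow> three_state_update m f y = f y"
  by (cases m) auto

lemma contact_update_other: "y \<noteq> target m \<Longrightarrow> y \<in> contact_update m A \<longleftrightarrow> y \<in> A"
  by (cases m) auto

lemma contact_process_at_mark:
  assumes good: "good_realization G" and e: "e \<in> G m" and "0 \<le> u" "u < e"
    and quiet_sites: "\<And>y. y \<in> sites m \<Longrightarrow> quiet G y {u<..<e}"
  shows "target m \<in> contact_process G A e \<longleftrightarrow> target m \<in> contact_update m (contact_process G A u)"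
proof (cases m)
  case (Recov y)
  then show ?thesis using contact_process_at_recovery[OF good] e by simp
next
  case (LamArrow z y)
  then have "z \<noteq> y" using good_realization_nearest_neighbour[OF good e] by auto
  with LamArrow show ?thesis
    using contact_process_at_arrow[OF good e _ _ \<open>0 \<le> u\<close> \<open>u < e\<close>] quiet_sites by auto
next
  case (MuArrow z y)
  then have "z \<noteq> y" using good_realization_nearest_neighbour[OF good e] by auto
  with MuArrow show ?thesis
    using contact_process_at_arrow[OF good e _ _ \<open>0 \<le> u\<close> \<open>u < e\<close>] quiet_sites by auto
qed

lemma three_state_quiet:
  "three_state_process G \<zeta> \<Longrightarrow> 0 \<le> s \<Longrightarrow> s \<le> t \<Longrightarrow> quiet G x {s<..t} \<Longrightarrow> \<zeta> t x = \<zeta> s x"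
  unfolding three_state_process_def quiet_def affects_iff_target by blast

lemma three_state_at_mark:
  assumes "three_state_process G \<zeta>" "e \<in> G m"
  shows "\<exists>\<epsilon>>0. \<forall>u \<in> {e-\<epsilon><..<e}. \<zeta> e (target m) = three_state_update m (\<zeta> u) (target m)"
  using assms unfolding three_state_process_def
  by (cases m) (simp only: target.simps three_state_update.simps fun_upd_same; blast)+

section \<open>The coupling invariant\<close>

definition coupled :: "(int \<Rightarrow> int) \<Rightarrow> int set \<Rightarrow> bool" where
  "coupled f A \<longleftrightarrow> range f \<subseteq> {-1, 0, 1} \<and>
     (\<forall>x v w. f x = 1 \<longrightarrow> f w = 1 \<longrightarrow> x \<le> v \<longrightarrow> v \<le> w \<longrightarrow> f v \<noteq> -1 \<and> (f v = 1 \<longleftrightarrow> v \<in> A))"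

lemma coupledD:
  "coupled f A \<Longrightarrow> f x = 1 \<Longrightarrow> f w = 1 \<Longrightarrow> x \<le> v \<Longrightarrow> v \<le> w \<Longrightarrow> f v \<noteq> -1 \<and> (f v = 1 \<longleftrightarrow> v \<in> A)"
  unfolding coupled_def by blast

lemma coupled_values: "coupled f A \<Longrightarrow> f y = -1 \<or> f y = 0 \<or> f y = 1"
  unfolding coupled_def by auto

lemma coupled_cong:
  assumes "coupled f A" "\<And>v. f v \<noteq> -1 \<Longrightarrow> v \<in> B \<longleftrightarrow> v \<in> A"
  shows "coupled f B"
  using assms unfolding coupled_def by metis

lemma coupled_transfer:
  assumes "coupled f A"
    and "\<And>y. y \<notin> W \<Longrightarrow> f y = -1 \<and> g y = -1"
    and "\<And>y. y \<in> W \<Longrightarrow> g y = f y \<and> (y \<in> B \<longleftrightarrow> y \<in> A)"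
  shows "coupled g B"
proof -
  have "g = f"
  proof
    fix y
    show "g y = f y"
      using assms(2,3)[of y] by (cases "y \<in> W") auto
  qed
  moreover have "v \<in> B \<longleftrightarrow> v \<in> A" if "f v \<noteq> -1" for v
    using that assms(2,3)[of v] by auto
  ultimately show ?thesis
    using coupled_cong[OF assms(1)] by simp
qed

lemma coupled_recovery:
  assumes coupled: "coupled f A"
  shows "coupled (f(y := (if f y = 1 then 0 else f y))) (A - {y})"
    (is "coupled ?g ?B")
proof -
  have "?g v \<noteq> -1 \<and> (?g v = 1 \<longleftrightarrow> v \<in> ?B)"
    if "?g x = 1" "?g w = 1" "x \<le> v" "v \<le> w" for x v w
  proof -
    have "f x = 1" "f w = 1"
      using that(1,2) by (auto split: if_splits)
    then have "f v \<noteq> -1 \<and> (f v = 1 \<longleftrightarrow> v \<in> A)"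
      using coupledD[OF coupled] that(3,4) by blast
    then show ?thesis
      using coupled_values[OF coupled, of v] by auto
  qed
  moreover have "range ?g \<subseteq> {-1, 0, 1}"
    using coupled unfolding coupled_def by auto
  ultimately show ?thesis
    unfolding coupled_def by blast
qed

lemma spread_infected_around:
  fixes f :: "int \<Rightarrow> int"
  assumes adjacent: "z = y - 1 \<or> z = y + 1" and new_state: "c = f y \<or> c = 1 \<and> f z = 1"
    and gx: "(f(y := c)) x = 1" and gw: "(f(y := c)) w = 1"
    and "x \<le> v" "v \<le> w" "v \<noteq> y"
  shows "\<exists>x' w'. x' \<le> v \<and> v \<le> w' \<and> f x' = 1 \<and> f w' = 1"
proof -
  have source: "f y = 1 \<or> f z = 1" if "c = 1"
    using new_state that by auto
  obtain x' where "x' \<le> v" "f x' = 1"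
  proof (cases "x = y")
    case True
    then have "y < v" "z \<le> v" "f y = 1 \<or> f z = 1"
      using \<open>x \<le> v\<close> \<open>v \<noteq> y\<close> adjacent gx source by auto
    then show ?thesis
      using that[of y] that[of z] by auto
  next
    case False
    then show ?thesis
      using that gx \<open>x \<le> v\<close> by auto
  qed
  moreover obtain w' where "v \<le> w'" "f w' = 1"
  proof (cases "w = y")
    case True
    then have "v < y" "v \<le> z" "f y = 1 \<or> f z = 1"
      using \<open>v \<le> w\<close> \<open>v \<noteq> y\<close> adjacent gw source by auto
    then show ?thesis
      using that[of y] that[of z] by auto
  next
    case False
    then show ?thesis
      using that gw \<open>v \<le> w\<close> by auto
  qed
  ultimately show ?thesis
    by blast
qed

lemma coupled_spread:
  assumes coupled: "coupled f A" and adjacent: "z = y - 1 \<or> z = y + 1"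
    and new_state: "c = f y \<or> c = 1 \<and> f z = 1"
    and infects: "f z = 1 \<Longrightarrow> f y \<noteq> -1 \<Longrightarrow> c = 1"
  shows "coupled (f(y := c)) (if z \<in> A then insert y A else A)"
    (is "coupled ?g ?B")
proof -
  have "?g v \<noteq> -1 \<and> (?g v = 1 \<longleftrightarrow> v \<in> ?B)"
    if gx: "?g x = 1" and gw: "?g w = 1" and "x \<le> v" "v \<le> w" for x v w
  proof (cases "v = y")
    case False
    obtain x' w' where "x' \<le> v" "v \<le> w'" "f x' = 1" "f w' = 1"
      using spread_infected_around[OF adjacent new_state gx gw \<open>x \<le> v\<close> \<open>v \<le> w\<close> False] by blast
    then have "f v \<noteq> -1 \<and> (f v = 1 \<longleftrightarrow> v \<in> A)"
      using coupledD[OF coupled] by blast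
    then show ?thesis
      using False by simp
  next
    case True
    show ?thesis
    proof (cases "c = 1")
      case True
      then have "y \<in> A \<or> z \<in> A"
        using new_state coupledD[OF coupled, of y y y] coupledD[OF coupled, of z z z] by auto
      then show ?thesis using True \<open>v = y\<close> by auto
    next
      case False
      then have "x \<noteq> y" "w \<noteq> y" "c = f y"
        using gx gw new_state by auto
      then have "f x = 1" "f w = 1" "x < y" "y < w"
        using gx gw \<open>x \<le> v\<close> \<open>v \<le> w\<close> \<open>v = y\<close> by auto
      moreover have "x \<le> z" "z \<le> w"
        using adjacent \<open>x < y\<close> \<open>y < w\<close> by auto
      ultimately have "f y \<noteq> -1 \<and> (f y = 1 \<longleftrightarrow> y \<in> A)" "f z = 1 \<longleftrightarrow> z \<in> A"
        using coupledD[OF coupled, of x w] by auto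
      moreover have "f z \<noteq> 1"
        using infects False calculation(1) by blast
      ultimately show ?thesis
        using \<open>v = y\<close> \<open>c = f y\<close> by simp
    qed
  qed
  moreover have "range ?g \<subseteq> {-1, 0, 1}"
    using coupled new_state unfolding coupled_def by auto
  ultimately show ?thesis
    unfolding coupled_def by blast
qed

lemma coupled_update:
  assumes coupled: "coupled f A" and neighbour: "nearest_neighbour_mark m"
  shows "coupled (three_state_update m f) (contact_update m A)"
proof (cases m)
  case (Recov y)
  then show ?thesis using coupled_recovery[OF coupled] by simp
next
  case (LamArrow z y)
  then have adjacent: "z = y - 1 \<or> z = y + 1"
    using neighbour by auto
  have "coupled (f(y := (if f z = 1 \<and> (f y = 0 \<or> f y = -1) then 1 else f y)))
      (if z \<in> A then insert y A else A)"
    by (rule coupled_spread[OF coupled adjacent]; use coupled_values[OF coupled, of y] in auto)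
  then show ?thesis using LamArrow by simp
next
  case (MuArrow z y)
  then have adjacent: "z = y - 1 \<or> z = y + 1"
    using neighbour by auto
  have "coupled (f(y := (if f z = 1 \<and> f y = 0 then 1 else f y)))
      (if z \<in> A then insert y A else A)"
    by (rule coupled_spread[OF coupled adjacent]; use coupled_values[OF coupled, of y] in auto)
  then show ?thesis using MuArrow by simp
qed

section \<open>Induction over the marks of a window\<close>

lemma finite_events_induct:
  fixes E :: "real set" and T :: real
  assumes finite: "finite E" and pos: "\<And>e. e \<in> E \<Longrightarrow> 0 < e" and start: "P 0"
    and quiet_step: "\<And>s t. 0 \<le> s \<Longrightarrow> s \<le> t \<Longrightarrow> t \<le> T \<Longrightarrow> E \<inter> {s<..t} = {} \<Longrightarrow> P s \<Longrightarrow> P t"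
    and event_step: "\<And>e u. e \<in> E \<Longrightarrow> e \<le> T \<Longrightarrow> 0 \<le> u \<Longrightarrow> u < e \<Longrightarrow> E \<inter> {u<..<e} = {} \<Longrightarrow>
                  (\<And>v. u \<le> v \<Longrightarrow> v < e \<Longrightarrow> P v) \<Longrightarrow> P e"
    and "0 \<le> t" "t \<le> T"
  shows "P t"
  using \<open>0 \<le> t\<close> \<open>t \<le> T\<close>
proof (induction "card (E \<inter> {..t})" arbitrary: t rule: less_induct)
  case less
  show ?case
  proof (cases "E \<inter> {..t} = {}")
    case True
    then have "E \<inter> {0<..t} = {}"
      by auto
    then show ?thesis
      using quiet_step[of 0 t] start less.prems by auto
  next
    case False
    define e where "e = Max (E \<inter> {..t})"
    have fin_t: "finite (E \<inter> {..t})"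
      using finite by simp
    have e: "e \<in> E" "e \<le> t" "E \<inter> {e<..t} = {}"
      using Max_in[OF fin_t False] Max_ge[OF fin_t] unfolding e_def by fastforce+
    define u where "u = Max (insert 0 (E \<inter> {..<e}))"
    have fin_e: "finite (insert 0 (E \<inter> {..<e}))"
      using finite by simp
    have u: "0 \<le> u" "u < e" "E \<inter> {u<..<e} = {}"
    proof -
      show "0 \<le> u"
        using Max_ge[OF fin_e] unfolding u_def by simp
      show "u < e"
        using Max_in[OF fin_e] pos[OF e(1)] unfolding u_def by fastforce
      show "E \<inter> {u<..<e} = {}"
        using Max_ge[OF fin_e] unfolding u_def by fastforce
    qed
    have "P v" if "u \<le> v" "v < e" for v
    proof (rule less.hyps)
      have "e \<in> E \<inter> {..t}" "e \<notin> E \<inter> {..v}" "E \<inter> {..v} \<subseteq> E \<inter> {..t}"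
        using e that by auto
      then have "E \<inter> {..v} \<subset> E \<inter> {..t}"
        by blast
      then show "card (E \<inter> {..v}) < card (E \<inter> {..t})"
        using finite by (simp add: psubset_card_mono)
      show "0 \<le> v" "v \<le> T"
        using u that e(2) less.prems by auto
    qed
    then have "P e"
      using event_step e u less.prems by auto
    then show ?thesis
      using quiet_step[of e t] e pos less.prems by fastforce
  qed
qed

definition window_events :: "realization \<Rightarrow> int \<Rightarrow> int \<Rightarrow> real \<Rightarrow> real set" where
  "window_events G lo hi T = (\<Union>m \<in> {m. target m \<in> {lo<..hi}}. G m) \<inter> {..T}"

lemma finite_window_events:
  assumes good: "good_realization G"
  shows "finite (window_events G lo hi T)"
proof -
  let ?M = "\<Union>y \<in> {lo<..hi}.
    {Recov y, LamArrow (y - 1) y, LamArrow (y + 1) y, MuArrow (y - 1) y, MuArrow (y + 1) y}"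
  have "window_events G lo hi T \<subseteq> (\<Union>m \<in> ?M. G m \<inter> {..T})"
  proof
    fix s assume "s \<in> window_events G lo hi T"
    then obtain m where m: "s \<in> G m" "target m \<in> {lo<..hi}" "s \<le> T"
      unfolding window_events_def by blast
    have "m \<in> {Recov (target m), LamArrow (target m - 1) (target m),
        LamArrow (target m + 1) (target m), MuArrow (target m - 1) (target m),
        MuArrow (target m + 1) (target m)}"
      using good_realization_nearest_neighbour[OF good m(1)] by (cases m) auto
    with m show "s \<in> (\<Union>m \<in> ?M. G m \<inter> {..T})"
      by blast
  qed
  moreover have "finite (\<Union>m \<in> ?M. G m \<inter> {..T})"
    using good unfolding good_realization_def by (intro finite_UN_I) auto
  ultimately show ?thesis
    by (rule finite_subset)
qed

lemma window_events_quiet: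
  "window_events G lo hi T \<inter> I = {} \<Longrightarrow> I \<subseteq> {..T} \<Longrightarrow> y \<in> {lo<..hi} \<Longrightarrow> quiet G y I"
  unfolding window_events_def quiet_def by blast

lemma window_mark_sites:
  assumes good: "good_realization G" and "no_crossing G T lo" "no_crossing G T hi"
    and e: "e \<in> G m" "e \<le> T" and "target m \<in> {lo<..hi}"
  shows "sites m \<subseteq> {lo<..hi}"
proof -
  have "z \<in> {lo<..hi}" if "m = LamArrow z y \<or> m = MuArrow z y" for z y
  proof -
    have "y = z + 1 \<or> y = z - 1" "y \<in> {lo<..hi}"
      using good_realization_nearest_neighbour[OF good e(1)] that assms(6) by auto
    moreover have "\<not> (z = lo \<and> y = lo + 1)" "\<not> (z = hi + 1 \<and> y = hi)"
      using assms(2,3) e that unfolding no_crossing_def by auto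
    ultimately show ?thesis
      by auto
  qed
  then show ?thesis
    using assms(6) by (cases m) auto
qed

lemma window_at_mark:
  assumes good: "good_realization G" and \<zeta>: "three_state_process G \<zeta>"
    and lo: "no_crossing G T lo" and hi: "no_crossing G T hi"
    and e: "e \<in> window_events G lo hi T"
    and u0: "0 \<le> u0" "u0 < e" "window_events G lo hi T \<inter> {u0<..<e} = {}"
  obtains m u where "e \<in> G m" "sites m \<subseteq> {lo<..hi}" "u0 \<le> u" "u < e"
    "\<And>y. y \<in> {lo<..hi} \<Longrightarrow> \<zeta> e y = three_state_update m (\<zeta> u) y"
    "\<And>y. y \<in> {lo<..hi} \<Longrightarrow>
       y \<in> contact_process G A e \<longleftrightarrow> y \<in> contact_update m (contact_process G A u)"
proof -
  obtain m where m: "e \<in> G m" "target m \<in> {lo<..hi}" and "e \<le> T"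
    using e unfolding window_events_def by blast
  have sites: "sites m \<subseteq> {lo<..hi}"
    using window_mark_sites[OF good lo hi m(1) \<open>e \<le> T\<close> m(2)] .
  obtain \<epsilon> where "\<epsilon> > 0"
    and update: "\<And>u. u \<in> {e-\<epsilon><..<e} \<Longrightarrow> \<zeta> e (target m) = three_state_update m (\<zeta> u) (target m)"
    using three_state_at_mark[OF \<zeta> m(1)] by blast
  \<comment> \<open>after the previous mark of the window, and close enough to \<open>e\<close> for the update rule\<close>
  define u where "u = max u0 (e - \<epsilon> / 2)"
  have u: "u0 \<le> u" "u < e" "e - \<epsilon> < u" "0 \<le> u"
    using u0 \<open>\<epsilon> > 0\<close> unfolding u_def by auto
  have "window_events G lo hi T \<inter> {u<..<e} = {}"
    using u0(3) u(1) by auto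
  then have quiet_u: "quiet G y {u<..<e}" if "y \<in> {lo<..hi}" for y
    by (rule window_events_quiet[OF _ _ that]) (use \<open>e \<le> T\<close> in auto)
  have "\<zeta> e y = three_state_update m (\<zeta> u) y \<and>
      (y \<in> contact_process G A e \<longleftrightarrow> y \<in> contact_update m (contact_process G A u))"
    if y: "y \<in> {lo<..hi}" for y
  proof (cases "y = target m")
    case True
    have "quiet G y' {u<..<e}" if "y' \<in> sites m" for y'
      using quiet_u sites that by blast
    then show ?thesis
      using update u contact_process_at_mark[OF good m(1) u(4,2)] True by auto
  next
    case False
    then have "quiet G y {u<..e}"
      using quiet_upto_mark[OF good m(1)] quiet_u[OF y] by auto
    then show ?thesis
      using three_state_quiet[OF \<zeta>] contact_process_quiet u(4,2) False
        three_state_update_other contact_update_other by auto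
  qed
  then show ?thesis
    using that[OF m(1) sites u(1,2)] by blast
qed

lemma window_induct:
  assumes good: "good_realization G" and \<zeta>: "three_state_process G \<zeta>"
    and lo: "no_crossing G T lo" and hi: "no_crossing G T hi"
    and start: "P 0"
    and quiet_step: "\<And>s t. 0 \<le> s \<Longrightarrow> s \<le> t \<Longrightarrow> t \<le> T \<Longrightarrow>
      (\<And>y. y \<in> {lo<..hi} \<Longrightarrow> \<zeta> t y = \<zeta> s y) \<Longrightarrow>
      (\<And>y. y \<in> {lo<..hi} \<Longrightarrow> y \<in> contact_process G A t \<longleftrightarrow> y \<in> contact_process G A s) \<Longrightarrow>
      P s \<Longrightarrow> P t"
    and mark_step: "\<And>m e u. e \<in> G m \<Longrightarrow> sites m \<subseteq> {lo<..hi} \<Longrightarrow> 0 \<le> u \<Longrightarrow> u < e \<Longrightarrow> e \<le> T \<Longrightarrow>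
      (\<And>y. y \<in> {lo<..hi} \<Longrightarrow> \<zeta> e y = three_state_update m (\<zeta> u) y) \<Longrightarrow>
      (\<And>y. y \<in> {lo<..hi} \<Longrightarrow>
         y \<in> contact_process G A e \<longleftrightarrow> y \<in> contact_update m (contact_process G A u)) \<Longrightarrow>
      P u \<Longrightarrow> P e"
    and "0 \<le> t" "t \<le> T"
  shows "P t"
proof (rule finite_events_induct[where E = "window_events G lo hi T"])
  show "finite (window_events G lo hi T)"
    using good by (rule finite_window_events)
  show "0 < e" if "e \<in> window_events G lo hi T" for e
    using that good_realization_pos[OF good] unfolding window_events_def by blast
  show "P 0" "0 \<le> t" "t \<le> T"
    using assms(5,8,9) .
next
  fix s t
  assume st: "0 \<le> s" "s \<le> t" "t \<le> T" "window_events G lo hi T \<inter> {s<..t} = {}" and "P s"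
  have "quiet G y {s<..t}" if "y \<in> {lo<..hi}" for y
    by (rule window_events_quiet[OF st(4) _ that]) (use st(3) in auto)
  then have "\<zeta> t y = \<zeta> s y" "y \<in> contact_process G A t \<longleftrightarrow> y \<in> contact_process G A s"
    if "y \<in> {lo<..hi}" for y
    using three_state_quiet[OF \<zeta> st(1,2)] contact_process_quiet[OF st(1,2)] that by blast+
  then show "P t"
    by (rule quiet_step[OF st(1-3) _ _ \<open>P s\<close>])
next
  fix e u0
  assume e: "e \<in> window_events G lo hi T" "e \<le> T"
    and u0: "0 \<le> u0" "u0 < e" "window_events G lo hi T \<inter> {u0<..<e} = {}"
    and before: "\<And>v. u0 \<le> v \<Longrightarrow> v < e \<Longrightarrow> P v"
  obtain m u where "e \<in> G m" "sites m \<subseteq> {lo<..hi}" "u0 \<le> u" "u < e"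
    "\<And>y. y \<in> {lo<..hi} \<Longrightarrow> \<zeta> e y = three_state_update m (\<zeta> u) y"
    "\<And>y. y \<in> {lo<..hi} \<Longrightarrow>
       y \<in> contact_process G A e \<longleftrightarrow> y \<in> contact_update m (contact_process G A u)"
    by (rule window_at_mark[OF good \<zeta> lo hi e(1) u0]) (rule that)
  moreover have "0 \<le> u"
    using u0(1) \<open>u0 \<le> u\<close> by linarith
  ultimately show "P e"
    using mark_step e(2) before by blast
qed

lemma three_state_unvisited_window:
  assumes good: "good_realization G" and \<zeta>: "three_state_process G \<zeta>"
    and lo: "no_crossing G T lo" and hi: "no_crossing G T hi" and "0 \<notin> {lo<..hi}"
    and "0 \<le> t" "t \<le> T" "y \<in> {lo<..hi}"
  shows "\<zeta> t y = -1"
proof -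
  have "\<forall>y \<in> {lo<..hi}. \<zeta> t y = -1"
  proof (rule window_induct[OF good \<zeta> lo hi, where A = UNIV])
    show "\<forall>y \<in> {lo<..hi}. \<zeta> 0 y = -1"
      using \<zeta> \<open>0 \<notin> {lo<..hi}\<close> unfolding three_state_process_def by auto
  next
    fix m e u
    assume "sites m \<subseteq> {lo<..hi}" "\<forall>y \<in> {lo<..hi}. \<zeta> u y = -1"
      and "\<And>y. y \<in> {lo<..hi} \<Longrightarrow> \<zeta> e y = three_state_update m (\<zeta> u) y"
    then show "\<forall>y \<in> {lo<..hi}. \<zeta> e y = -1"
      by (cases m) auto
  qed (use assms in auto)
  then show ?thesis
    using \<open>y \<in> {lo<..hi}\<close> by blast
qed

lemma three_state_confined:
  assumes good: "good_realization G" and \<zeta>: "three_state_process G \<zeta>"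
  obtains lo hi where "no_crossing G T lo" "no_crossing G T hi"
    "\<And>s y. 0 \<le> s \<Longrightarrow> s \<le> T \<Longrightarrow> y \<notin> {lo<..hi} \<Longrightarrow> \<zeta> s y = -1"
proof -
  have barriers: "\<exists>x \<ge> n. no_crossing G T x" "\<exists>x \<le> -n. no_crossing G T x" for n
    using good unfolding good_realization_def by blast+
  obtain hi where hi: "0 \<le> hi" "no_crossing G T hi"
    using barriers(1)[of 0] by blast
  obtain lo where lo: "lo \<le> -1" "no_crossing G T lo"
    using barriers(2)[of 1] by blast
  have "\<zeta> s y = -1" if "0 \<le> s" "s \<le> T" "y \<notin> {lo<..hi}" for s y
  proof (cases "hi < y")
    case True
    obtain hi' where "y \<le> hi'" "no_crossing G T hi'"
      using barriers[of y] by blast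
    then show ?thesis
      using three_state_unvisited_window[OF good \<zeta> hi(2)] True hi(1) that(1,2) by auto
  next
    case False
    obtain lo' where "lo' \<le> y - 1" "no_crossing G T lo'"
      using barriers(2)[of "1 - y"] by auto
    then show ?thesis
      using three_state_unvisited_window[OF good \<zeta> _ lo(2)] False lo(1) that by auto
  qed
  then show ?thesis
    using lo(2) hi(2) that by blast
qed

lemma coupled_three_state_contact:
  assumes good: "good_realization G" and \<zeta>: "three_state_process G \<zeta>" and "0 \<le> t"
  shows "coupled (\<zeta> t) (contact_process G UNIV t)"
proof -
  obtain lo hi where lo: "no_crossing G t lo" and hi: "no_crossing G t hi"
    and outside: "\<And>s y. 0 \<le> s \<Longrightarrow> s \<le> t \<Longrightarrow> y \<notin> {lo<..hi} \<Longrightarrow> \<zeta> s y = -1"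
    by (rule three_state_confined[OF good \<zeta>, of t]) (rule that)
  show ?thesis
  proof (rule window_induct[OF good \<zeta> lo hi, where A = UNIV])
    have "\<zeta> 0 = (\<lambda>x. if x = 0 then 1 else -1)"
      using \<zeta> unfolding three_state_process_def by blast
    moreover have "reach G 0 0 0 0"
      by (rule reach.vert) auto
    ultimately show "coupled (\<zeta> 0) (contact_process G UNIV 0)"
      unfolding coupled_def contact_process_def by auto
  next
    fix s t'
    assume st: "0 \<le> s" "s \<le> t'" "t' \<le> t"
      and same: "\<And>y. y \<in> {lo<..hi} \<Longrightarrow> \<zeta> t' y = \<zeta> s y"
      and same_cp: "\<And>y. y \<in> {lo<..hi} \<Longrightarrow>
        y \<in> contact_process G UNIV t' \<longleftrightarrow> y \<in> contact_process G UNIV s"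
      and coupled: "coupled (\<zeta> s) (contact_process G UNIV s)"
    from coupled show "coupled (\<zeta> t') (contact_process G UNIV t')"
    proof (rule coupled_transfer)
      show "\<zeta> s y = -1 \<and> \<zeta> t' y = -1" if "y \<notin> {lo<..hi}" for y
        using outside that st by auto
    qed (use same same_cp in blast)
  next
    fix m e u
    assume m: "e \<in> G m" "sites m \<subseteq> {lo<..hi}" "0 \<le> u" "u < e" "e \<le> t"
      and updated: "\<And>y. y \<in> {lo<..hi} \<Longrightarrow> \<zeta> e y = three_state_update m (\<zeta> u) y"
      and updated_cp: "\<And>y. y \<in> {lo<..hi} \<Longrightarrow>
        y \<in> contact_process G UNIV e \<longleftrightarrow> y \<in> contact_update m (contact_process G UNIV u)"
      and coupled: "coupled (\<zeta> u) (contact_process G UNIV u)"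
    have "coupled (three_state_update m (\<zeta> u)) (contact_update m (contact_process G UNIV u))"
      using coupled_update[OF coupled good_realization_nearest_neighbour[OF good m(1)]] .
    then show "coupled (\<zeta> e) (contact_process G UNIV e)"
    proof (rule coupled_transfer)
      show "three_state_update m (\<zeta> u) y = -1 \<and> \<zeta> e y = -1" if "y \<notin> {lo<..hi}" for y
      proof -
        have "y \<noteq> target m"
          using that m(2) target_in_sites by blast
        then show ?thesis
          using that m outside[of u y] outside[of e y] three_state_update_other by simp
      qed
    qed (use updated updated_cp in blast)
  qed (use assms in auto)
qed

lemma coupled_infected_eq:
  assumes coupled: "coupled f A" and finite: "finite {x. f x = 1}" and nonempty: "{x. f x = 1} \<noteq> {}"
  shows "{x. f x = 1} = A \<inter> {Inf {x. f x = 1} .. Sup {x. f x = 1}}"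
proof -
  let ?I = "{x. f x = 1}"
  have hull: "Inf ?I = Min ?I" "Sup ?I = Max ?I"
    using cInf_eq_Min[OF finite nonempty] cSup_eq_Max[OF finite nonempty] .
  have ends: "f (Min ?I) = 1" "f (Max ?I) = 1"
    using Min_in[OF finite nonempty] Max_in[OF finite nonempty] by simp_all
  show ?thesis
  proof
    show "?I \<subseteq> A \<inter> {Inf ?I .. Sup ?I}"
    proof
      fix x assume x: "x \<in> ?I"
      then have "x \<in> A"
        using coupledD[OF coupled, of x x x] by simp
      then show "x \<in> A \<inter> {Inf ?I .. Sup ?I}"
        using Min_le[OF finite x] Max_ge[OF finite x] hull by simp
    qed
    show "A \<inter> {Inf ?I .. Sup ?I} \<subseteq> ?I"
    proof
      fix x assume "x \<in> A \<inter> {Inf ?I .. Sup ?I}"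
      then show "x \<in> ?I"
        using coupledD[OF coupled ends, of x] hull by simp
    qed
  qed
qed

lemma three_state_infected_finite:
  assumes "good_realization G" "three_state_process G \<zeta>" "0 \<le> t"
  shows "finite {x. \<zeta> t x = 1}"
proof -
  obtain lo hi where outside: "\<And>s y. 0 \<le> s \<Longrightarrow> s \<le> t \<Longrightarrow> y \<notin> {lo<..hi} \<Longrightarrow> \<zeta> s y = -1"
    by (rule three_state_confined[OF assms(1,2), of t]) (rule that)
  have "{x. \<zeta> t x = 1} \<subseteq> {lo<..hi}"
  proof
    fix x assume "x \<in> {x. \<zeta> t x = 1}"
    then show "x \<in> {lo<..hi}"
      using outside[of t x] assms(3) by fastforce
  qed
  then show ?thesis
    by (rule finite_subset) simp
qed

theorem mainTheorem6:
  fixes lam mu :: real and G :: realization and \<zeta> :: "real \<Rightarrow> int \<Rightarrow> int"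
  assumes "0 < lam" and "lam \<le> mu"
    and "good_realization G"
    and "three_state_process G \<zeta>"
  shows "\<forall>t \<ge> 0. {x. \<zeta> t x = 1} \<noteq> {} \<longrightarrow>
           {x. \<zeta> t x = 1} = contact_process G UNIV t
              \<inter> {Inf {x. \<zeta> t x = 1} .. Sup {x. \<zeta> t x = 1}}"
  \<comment> \<open>The rates only enter through the law of \<open>G\<close>; the statement holds for every good realization.\<close>
proof (intro allI impI)
  fix t :: real
  assume "0 \<le> t" and "{x. \<zeta> t x = 1} \<noteq> {}"
  with assms(3,4) show "{x. \<zeta> t x = 1} =
      contact_process G UNIV t \<inter> {Inf {x. \<zeta> t x = 1} .. Sup {x. \<zeta> t x = 1}}"
    by (intro coupled_infected_eq coupled_three_state_contact three_state_infected_finite)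
qed

end
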